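(* Let $(X,\|\cdot\|_X)$ be a Banach space and $\mathcal{K}\subset X$ compact. For every $n\ge1$ and every $\gamma>0$, $$d_n^{\gamma^2\mathrm{diam}(\mathcal{K})}(\mathcal{K})_X\le\delta^*_{n,\gamma}(\mathcal{K})_X.$$
   Context: $\mathrm{diam}(\mathcal{K})=\sup_{f,g\in\mathcal{K}}\|f-g\|_X$. The stable manifold width is $\delta^*_{n,\gamma}(\mathcal{K})_X=\inf_{a,M,\|\cdot\|_{Y_n}}\sup_{f\in\mathcal{K}}\|f-M(a(f))\|_X$, the infimum over all norms $\|\cdot\|_{Y_n}$ on $\mathbb{R}^n$ and all maps $a:\mathcal{K}\to(\mathbb{R}^n,\|\cdot\|_{Y_n})$, $M:(\mathbb{R}^n,\|\cdot\|_{Y_n})\to X$ that are both $\gamma$-Lipschitz. For $k\ge1$ and a norm $\|\cdot\|_{Y_k}$ on $\mathbb{R}^k$ let $B_{Y_k}=\{y\in\mathbb{R}^k:\|y\|_{Y_k}\le1\}$; $d^\gamma(\mathcal{K},Y_k)_X=\inf_{\Phi}\sup_{f\in\mathcal{K}}\inf_{y\in B_{Y_k}}\|f-\Phi(y)\|_X$, the infimum over all maps $\Phi:B_{Y_k}\to X$ with $\|\Phi(y)-\Phi(y')\|_X\le\gamma\|y-y'\|_{Y_k}$; and the Lipschitz width is $d_n^\gamma(\mathcal{K})_X=\inf_{1\le k\le n}\inf_{\|\cdot\|_{Y_k}}d^\gamma(\mathcal{K},Y_k)_X$, the inner infimum over all norms on $\mathbb{R}^k$. *)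

theory Defs
  imports "HOL-Analysis.Analysis"
begin

text \<open>R^k is represented by the coordinate space of functions nat => real vanishing
  from index k on.\<close>
definition coord_space :: "nat \<Rightarrow> (nat \<Rightarrow> real) set" where
  "coord_space k = {y. \<forall>i\<ge>k. y i = 0}"

definition vsub :: "(nat \<Rightarrow> real) \<Rightarrow> (nat \<Rightarrow> real) \<Rightarrow> (nat \<Rightarrow> real)" where
  "vsub x y = (\<lambda>i. x i - y i)"

definition is_norm_on :: "nat \<Rightarrow> ((nat \<Rightarrow> real) \<Rightarrow> real) \<Rightarrow> bool" where
  "is_norm_on k N \<longleftrightarrow>
     (\<forall>x\<in>coord_space k. N x \<ge> 0 \<and> (N x = 0 \<longleftrightarrow> x = (\<lambda>i. 0))) \<and>
     (\<forall>x\<in>coord_space k. \<forall>c. N (\<lambda>i. c * x i) = \<bar>c\<bar> * N x) \<and>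
     (\<forall>x\<in>coord_space k. \<forall>y\<in>coord_space k. N (\<lambda>i. x i + y i) \<le> N x + N y)"

definition stable_manifold_width ::
    "real \<Rightarrow> nat \<Rightarrow> 'a::real_normed_vector set \<Rightarrow> real" where
  "stable_manifold_width \<gamma> n K =
     Inf {Sup {norm (f - M (a f)) | f. f \<in> K} | N a M.
            is_norm_on n N \<and>
            (\<forall>f\<in>K. a f \<in> coord_space n) \<and>
            (\<forall>f\<in>K. \<forall>g\<in>K. N (vsub (a f) (a g)) \<le> \<gamma> * norm (f - g)) \<and>
            (\<forall>y\<in>coord_space n. \<forall>y'\<in>coord_space n.
                norm (M y - M y') \<le> \<gamma> * N (vsub y y'))}"

definition unit_ball_norm :: "nat \<Rightarrow> ((nat \<Rightarrow> real) \<Rightarrow> real) \<Rightarrow> (nat \<Rightarrow> real) set" where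
  "unit_ball_norm k N = {y \<in> coord_space k. N y \<le> 1}"

definition lipschitz_width_fixed ::
    "real \<Rightarrow> nat \<Rightarrow> ((nat \<Rightarrow> real) \<Rightarrow> real) \<Rightarrow> 'a::real_normed_vector set \<Rightarrow> real" where
  "lipschitz_width_fixed \<gamma> k N K =
     Inf {Sup {Inf {norm (f - \<Phi> y) | y. y \<in> unit_ball_norm k N} | f. f \<in> K} | \<Phi>.
            \<forall>y\<in>unit_ball_norm k N. \<forall>y'\<in>unit_ball_norm k N.
               norm (\<Phi> y - \<Phi> y') \<le> \<gamma> * N (vsub y y')}"

definition lipschitz_width ::
    "real \<Rightarrow> nat \<Rightarrow> 'a::real_normed_vector set \<Rightarrow> real" where
  "lipschitz_width \<gamma> n K =
     Inf {lipschitz_width_fixed \<gamma> k N K | k N. 1 \<le> k \<and> k \<le> n \<and> is_norm_on k N}"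

end

theory Submission
  imports Defs
begin

text \<open>Given an admissible encoder \<open>a\<close> and decoder \<open>M\<close>, fix \<open>f\<^sub>0 \<in> K\<close>. Since \<open>a\<close> is
  \<open>\<gamma>\<close>-Lipschitz, \<open>a(K)\<close> lies in the ball of radius \<open>c = \<gamma> diam K\<close> around \<open>a(f\<^sub>0)\<close>, so the
  map \<open>\<Phi>(y) = M(a(f\<^sub>0) + c y)\<close> on the unit ball has an image containing \<open>M(a(K))\<close>, and \<open>\<Phi>\<close> is
  \<open>\<gamma> c = \<gamma>\<^sup>2 diam K\<close>-Lipschitz. Hence every \<open>f \<in> K\<close> is approximated by the image of \<open>\<Phi>\<close>
  at least as well as by \<open>M(a(f))\<close>.\<close>

lemma is_norm_on_sum_abs: "is_norm_on n (\<lambda>x. \<Sum>i<n. \<bar>x i\<bar>)"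
proof -
  have "x = (\<lambda>i. 0)" if "x \<in> coord_space n" "(\<Sum>i<n. \<bar>x i\<bar>) = 0" for x :: "nat \<Rightarrow> real"
  proof
    fix i show "x i = 0"
      using that by (cases "i < n") (auto simp: sum_nonneg_eq_0_iff coord_space_def)
  qed
  moreover have "(\<Sum>i<n. \<bar>x i + y i\<bar>) \<le> (\<Sum>i<n. \<bar>x i\<bar>) + (\<Sum>i<n. \<bar>y i\<bar>)" for x y :: "nat \<Rightarrow> real"
    by (simp add: sum.distrib[symmetric] abs_triangle_ineq sum_mono)
  moreover have "(\<Sum>i<n. \<bar>c * x i\<bar>) = \<bar>c\<bar> * (\<Sum>i<n. \<bar>x i\<bar>)" for c and x :: "nat \<Rightarrow> real"
    by (simp add: abs_mult sum_distrib_left)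
  ultimately show ?thesis
    unfolding is_norm_on_def by (auto simp: sum_nonneg)
qed

lemma is_norm_on_zero: "is_norm_on k N \<Longrightarrow> N (\<lambda>i. 0) = 0"
  unfolding is_norm_on_def coord_space_def by auto

lemma is_norm_on_scale:
  "is_norm_on k N \<Longrightarrow> x \<in> coord_space k \<Longrightarrow> N (\<lambda>i. c * x i) = \<bar>c\<bar> * N x"
  unfolding is_norm_on_def by blast

lemma vsub_in_coord_space:
  "x \<in> coord_space k \<Longrightarrow> y \<in> coord_space k \<Longrightarrow> vsub x y \<in> coord_space k"
  unfolding coord_space_def vsub_def by auto

lemma is_norm_on_vsub_nonneg:
  "is_norm_on k N \<Longrightarrow> x \<in> coord_space k \<Longrightarrow> y \<in> coord_space k \<Longrightarrow> 0 \<le> N (vsub x y)"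
  using vsub_in_coord_space unfolding is_norm_on_def by blast

lemma zero_in_unit_ball_norm: "is_norm_on k N \<Longrightarrow> (\<lambda>i. 0) \<in> unit_ball_norm k N"
  using is_norm_on_zero[of k N] unfolding unit_ball_norm_def coord_space_def by auto

lemma unit_ball_norm_subset: "unit_ball_norm k N \<subseteq> coord_space k"
  unfolding unit_ball_norm_def by auto

lemma bdd_above_norm_lipschitz_image:
  fixes h :: "'a::real_normed_vector \<Rightarrow> 'b::real_normed_vector"
  assumes "bounded K" "0 \<le> L"
    and lip: "\<And>f g. f \<in> K \<Longrightarrow> g \<in> K \<Longrightarrow> norm (h f - h g) \<le> L * norm (f - g)"
  shows "bdd_above ((\<lambda>f. norm (h f)) ` K)"
proof (cases "K = {}")
  case False
  then obtain f0 where f0: "f0 \<in> K" by blast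
  obtain B where B: "\<And>x. x \<in> K \<Longrightarrow> norm x \<le> B" using assms(1) bounded_iff by blast
  have "norm (h f) \<le> norm (h f0) + L * (B + B)" if f: "f \<in> K" for f
  proof -
    have "norm (h f) \<le> norm (h f0) + norm (h f - h f0)" by (rule norm_triangle_sub)
    also have "norm (h f - h f0) \<le> L * norm (f - f0)" using lip f f0 .
    also have "norm (f - f0) \<le> B + B" using norm_triangle_ineq4[of f f0] B[OF f] B[OF f0] by linarith
    finally show ?thesis using \<open>0 \<le> L\<close> by (simp add: mult_left_mono)
  qed
  then show ?thesis by (auto intro!: bdd_aboveI[where M = "norm (h f0) + L * (B + B)"])
qed simp

lemma INF_dist_le: "z \<in> B \<Longrightarrow> (INF y\<in>B. norm (f - \<Phi> y)) \<le> norm (f - \<Phi> z)"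
  by (rule cINF_lower) (auto intro!: bdd_belowI[where m = 0])

lemma INF_dist_nonneg: "B \<noteq> {} \<Longrightarrow> 0 \<le> (INF y\<in>B. norm (f - \<Phi> y))"
  by (rule cINF_greatest) auto

lemma SUP_INF_dist_nonneg:
  assumes "bounded K" "K \<noteq> {}" "z \<in> B"
  shows "0 \<le> (SUP f\<in>K. INF y\<in>B. norm (f - \<Phi> y))"
proof -
  obtain f0 where f0: "f0 \<in> K" using assms(2) by blast
  obtain C where C: "\<And>x. x \<in> K \<Longrightarrow> norm x \<le> C" using assms(1) bounded_iff by blast
  have "(INF y\<in>B. norm (f - \<Phi> y)) \<le> C + norm (\<Phi> z)" if "f \<in> K" for f
    using INF_dist_le[OF assms(3), of f \<Phi>] norm_triangle_ineq4[of f "\<Phi> z"] C[OF that]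
    by linarith
  then have bdd: "bdd_above ((\<lambda>f. INF y\<in>B. norm (f - \<Phi> y)) ` K)"
    by (auto intro!: bdd_aboveI[where M = "C + norm (\<Phi> z)"])
  have "0 \<le> (INF y\<in>B. norm (f0 - \<Phi> y))"
    using assms(3) by (intro INF_dist_nonneg) auto
  then show ?thesis by (rule cSUP_upper2[OF bdd f0])
qed

lemma SUP_INF_dist_le:
  assumes "K \<noteq> {}" and "\<And>f. f \<in> K \<Longrightarrow> \<exists>y\<in>B. norm (f - \<Phi> y) \<le> e"
  shows "(SUP f\<in>K. INF y\<in>B. norm (f - \<Phi> y)) \<le> e"
proof (rule cSUP_least[OF assms(1)])
  fix f assume "f \<in> K"
  then obtain y where "y \<in> B" "norm (f - \<Phi> y) \<le> e" using assms(2) by blast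
  then show "(INF y\<in>B. norm (f - \<Phi> y)) \<le> e" using INF_dist_le[of y B f \<Phi>] by linarith
qed

definition lipschitz_on_unit_ball ::
    "real \<Rightarrow> nat \<Rightarrow> ((nat \<Rightarrow> real) \<Rightarrow> real) \<Rightarrow> ((nat \<Rightarrow> real) \<Rightarrow> 'a::real_normed_vector) \<Rightarrow> bool"
  where "lipschitz_on_unit_ball \<gamma> k N \<Phi> \<longleftrightarrow>
    (\<forall>y\<in>unit_ball_norm k N. \<forall>y'\<in>unit_ball_norm k N. norm (\<Phi> y - \<Phi> y') \<le> \<gamma> * N (vsub y y'))"

lemma lipschitz_on_unit_ball_const:
  assumes "is_norm_on k N" "0 \<le> \<gamma>"
  shows "lipschitz_on_unit_ball \<gamma> k N (\<lambda>_. c)"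
  using is_norm_on_vsub_nonneg[OF assms(1)] subsetD[OF unit_ball_norm_subset] assms(2)
  by (auto simp: lipschitz_on_unit_ball_def intro!: mult_nonneg_nonneg)

lemma lipschitz_width_fixed_eq_INF:
  "lipschitz_width_fixed \<gamma> k N K =
    (INF \<Phi>\<in>{\<Phi>. lipschitz_on_unit_ball \<gamma> k N \<Phi>}. SUP f\<in>K. INF y\<in>unit_ball_norm k N. norm (f - \<Phi> y))"
  unfolding lipschitz_width_fixed_def lipschitz_on_unit_ball_def by (simp add: setcompr_eq_image)

lemma lipschitz_width_eq_INF:
  "lipschitz_width \<gamma> n K =
    (INF (k, N)\<in>{(k, N). 1 \<le> k \<and> k \<le> n \<and> is_norm_on k N}. lipschitz_width_fixed \<gamma> k N K)"
  unfolding lipschitz_width_def by (rule arg_cong[where f = Inf]) auto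

lemma lipschitz_width_fixed_nonneg:
  assumes "is_norm_on k N" "bounded K" "K \<noteq> {}" "0 \<le> \<gamma>"
  shows "0 \<le> lipschitz_width_fixed \<gamma> k N K"
  unfolding lipschitz_width_fixed_eq_INF
proof (rule cINF_greatest)
  show "{\<Phi>. lipschitz_on_unit_ball \<gamma> k N \<Phi>} \<noteq> {}"
    using lipschitz_on_unit_ball_const[OF assms(1,4)] by blast
  show "0 \<le> (SUP f\<in>K. INF y\<in>unit_ball_norm k N. norm (f - \<Phi> y))" for \<Phi> :: "(nat \<Rightarrow> real) \<Rightarrow> 'a"
    by (rule SUP_INF_dist_nonneg[OF assms(2,3) zero_in_unit_ball_norm[OF assms(1)]])
qed

lemma lipschitz_width_fixed_le:
  assumes "is_norm_on k N" "bounded K" "K \<noteq> {}" "lipschitz_on_unit_ball \<gamma> k N \<Phi>"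
    and "\<And>f. f \<in> K \<Longrightarrow> \<exists>y\<in>unit_ball_norm k N. norm (f - \<Phi> y) \<le> e"
  shows "lipschitz_width_fixed \<gamma> k N K \<le> e"
  unfolding lipschitz_width_fixed_eq_INF
proof (rule cINF_lower2)
  show "bdd_below ((\<lambda>\<Phi>. SUP f\<in>K. INF y\<in>unit_ball_norm k N. norm (f - \<Phi> y)) `
      {\<Phi>. lipschitz_on_unit_ball \<gamma> k N \<Phi>})"
    using SUP_INF_dist_nonneg[OF assms(2,3) zero_in_unit_ball_norm[OF assms(1)]]
    by (auto intro!: bdd_belowI[where m = 0])
  show "\<Phi> \<in> {\<Phi>. lipschitz_on_unit_ball \<gamma> k N \<Phi>}" using assms(4) by simp
  show "(SUP f\<in>K. INF y\<in>unit_ball_norm k N. norm (f - \<Phi> y)) \<le> e"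
    using assms(3,5) by (rule SUP_INF_dist_le)
qed

lemma lipschitz_width_le_fixed:
  assumes "1 \<le> k" "k \<le> n" "is_norm_on k N" "bounded K" "K \<noteq> {}" "0 \<le> \<gamma>"
  shows "lipschitz_width \<gamma> n K \<le> lipschitz_width_fixed \<gamma> k N K"
proof -
  let ?A = "{(k', N'). 1 \<le> k' \<and> k' \<le> n \<and> is_norm_on k' N'}"
  let ?w = "\<lambda>(k', N'). lipschitz_width_fixed \<gamma> k' N' K"
  have "(INF p\<in>?A. ?w p) \<le> ?w (k, N)"
  proof (rule cINF_lower)
    show "bdd_below (?w ` ?A)"
      by (rule bdd_belowI[where m = 0]) (auto intro: lipschitz_width_fixed_nonneg[OF _ assms(4-6)])
  qed (use assms(1-3) in simp)
  then show ?thesis by (simp add: lipschitz_width_eq_INF)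
qed

text \<open>For empty \<open>K\<close> both widths degenerate to the unspecified value \<open>Sup {} :: real\<close>.\<close>

lemma lipschitz_width_empty:
  assumes "1 \<le> n" "0 \<le> \<gamma>"
  shows "lipschitz_width \<gamma> n ({} :: 'a::real_normed_vector set) = Sup {}"
proof -
  have fixed_empty: "lipschitz_width_fixed \<gamma> k N ({} :: 'a set) = Sup {}" if "is_norm_on k N" for k N
  proof -
    have "{\<Phi> :: _ \<Rightarrow> 'a. lipschitz_on_unit_ball \<gamma> k N \<Phi>} \<noteq> {}"
      using lipschitz_on_unit_ball_const[OF that assms(2)] by blast
    then show ?thesis by (simp add: lipschitz_width_fixed_eq_INF)
  qed
  have "lipschitz_width \<gamma> n ({} :: 'a set) = (INF p\<in>{(k, N). 1 \<le> k \<and> k \<le> n \<and> is_norm_on k N}. Sup {})"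
    unfolding lipschitz_width_eq_INF using fixed_empty by (intro INF_cong) auto
  also have "\<dots> = Sup {}"
    using is_norm_on_sum_abs[of n] assms(1) by (intro cINF_const) auto
  finally show ?thesis .
qed

definition stable_codec ::
    "real \<Rightarrow> nat \<Rightarrow> 'a::real_normed_vector set \<Rightarrow> ((nat \<Rightarrow> real) \<Rightarrow> real) \<Rightarrow>
      ('a \<Rightarrow> nat \<Rightarrow> real) \<Rightarrow> ((nat \<Rightarrow> real) \<Rightarrow> 'a) \<Rightarrow> bool"
  where "stable_codec \<gamma> n K N a M \<longleftrightarrow> is_norm_on n N \<and> (\<forall>f\<in>K. a f \<in> coord_space n) \<and>
    (\<forall>f\<in>K. \<forall>g\<in>K. N (vsub (a f) (a g)) \<le> \<gamma> * norm (f - g)) \<and>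
    (\<forall>y\<in>coord_space n. \<forall>y'\<in>coord_space n. norm (M y - M y') \<le> \<gamma> * N (vsub y y'))"

lemma le_stable_manifold_width:
  assumes "0 \<le> \<gamma>" and "\<And>N a M. stable_codec \<gamma> n K N a M \<Longrightarrow> e \<le> (SUP f\<in>K. norm (f - M (a f)))"
  shows "e \<le> stable_manifold_width \<gamma> n K"
proof -
  have "stable_codec \<gamma> n K (\<lambda>x. \<Sum>i<n. \<bar>x i\<bar>) (\<lambda>_ i. 0) (\<lambda>_. 0)"
    using is_norm_on_sum_abs[of n] assms(1)
    by (simp add: stable_codec_def coord_space_def vsub_def sum_nonneg)
  moreover have "e \<le> Sup {norm (f - M (a f)) | f. f \<in> K}" if "stable_codec \<gamma> n K N a M" for N a M
    using assms(2)[OF that] by (simp add: setcompr_eq_image)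
  ultimately show ?thesis
    unfolding stable_manifold_width_def stable_codec_def[symmetric] by (intro cInf_greatest) blast+
qed

lemma bdd_above_codec_error:
  assumes "bounded K" "0 \<le> \<gamma>" "stable_codec \<gamma> n K N a M"
  shows "bdd_above ((\<lambda>f. norm (f - M (a f))) ` K)"
proof (rule bdd_above_norm_lipschitz_image[OF assms(1)])
  show "0 \<le> 1 + \<gamma>\<^sup>2" by simp
  fix f g assume fg: "f \<in> K" "g \<in> K"
  have "norm (M (a f) - M (a g)) \<le> \<gamma> * N (vsub (a f) (a g))"
    using assms(3) fg unfolding stable_codec_def by blast
  also have "\<dots> \<le> \<gamma> * (\<gamma> * norm (f - g))"
    using assms(2,3) fg unfolding stable_codec_def by (simp add: mult_left_mono)
  finally have "norm (M (a f) - M (a g)) \<le> \<gamma>\<^sup>2 * norm (f - g)"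
    by (simp add: power2_eq_square mult.assoc)
  moreover have "norm ((f - M (a f)) - (g - M (a g))) \<le> norm (f - g) + norm (M (a f) - M (a g))"
    using norm_triangle_ineq4[of "f - g" "M (a f) - M (a g)"] by (simp add: algebra_simps)
  ultimately show "norm ((f - M (a f)) - (g - M (a g))) \<le> (1 + \<gamma>\<^sup>2) * norm (f - g)"
    by (simp add: distrib_right)
qed

lemma rescaled_chart_lipschitz:
  assumes "is_norm_on n N" "x0 \<in> coord_space n" "0 \<le> c"
    and M: "\<forall>y\<in>coord_space n. \<forall>y'\<in>coord_space n. norm (M y - M y') \<le> \<gamma> * N (vsub y y')"
  shows "lipschitz_on_unit_ball (\<gamma> * c) n N (\<lambda>y. M (\<lambda>i. x0 i + c * y i))"
  unfolding lipschitz_on_unit_ball_def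
proof (intro ballI)
  fix y y' assume "y \<in> unit_ball_norm n N" "y' \<in> unit_ball_norm n N"
  then have y: "y \<in> coord_space n" "y' \<in> coord_space n" using unit_ball_norm_subset by auto
  have "(\<lambda>i. x0 i + c * z i) \<in> coord_space n" if "z \<in> coord_space n" for z
    using that assms(2) unfolding coord_space_def by auto
  then have "norm (M (\<lambda>i. x0 i + c * y i) - M (\<lambda>i. x0 i + c * y' i))
      \<le> \<gamma> * N (vsub (\<lambda>i. x0 i + c * y i) (\<lambda>i. x0 i + c * y' i))"
    using M y by blast
  also have "vsub (\<lambda>i. x0 i + c * y i) (\<lambda>i. x0 i + c * y' i) = (\<lambda>i. c * vsub y y' i)"
    by (simp add: vsub_def algebra_simps)
  also have "N (\<lambda>i. c * vsub y y' i) = c * N (vsub y y')"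
    using is_norm_on_scale[OF assms(1) vsub_in_coord_space[OF y]] assms(3) by simp
  finally show "norm (M (\<lambda>i. x0 i + c * y i) - M (\<lambda>i. x0 i + c * y' i)) \<le> \<gamma> * c * N (vsub y y')"
    by (simp add: mult.assoc)
qed

lemma encoder_in_scaled_unit_ball:
  assumes "is_norm_on n N" "bounded K" "0 < \<gamma>" "f0 \<in> K" "f \<in> K"
    and a: "\<forall>f\<in>K. a f \<in> coord_space n" "\<forall>f\<in>K. \<forall>g\<in>K. N (vsub (a f) (a g)) \<le> \<gamma> * norm (f - g)"
  shows "\<exists>y\<in>unit_ball_norm n N. (\<lambda>i. a f0 i + \<gamma> * diameter K * y i) = a f"
proof -
  define c where "c = \<gamma> * diameter K"
  have dist: "norm (f - f0) \<le> diameter K"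
    using diameter_bounded_bound[OF assms(2,5,4)] by (simp add: dist_norm)
  show ?thesis
  proof (cases "c = 0")
    case True
    then have "f = f0" using dist assms(3) by (simp add: c_def)
    then show ?thesis using zero_in_unit_ball_norm[OF assms(1)] by force
  next
    case False
    then have "0 < c"
      using diameter_ge_0[OF assms(2)] assms(3) by (simp add: c_def zero_less_mult_iff)
    define y where "y = (\<lambda>i. (1 / c) * vsub (a f) (a f0) i)"
    have diff: "vsub (a f) (a f0) \<in> coord_space n" using vsub_in_coord_space a(1) assms(4,5) by blast
    have "N (vsub (a f) (a f0)) \<le> \<gamma> * norm (f - f0)" using a(2) assms(4,5) by blast
    also have "\<dots> \<le> c" unfolding c_def using dist assms(3) by simp
    finally have "N (vsub (a f) (a f0)) \<le> c" .
    moreover have "N y = N (vsub (a f) (a f0)) / c"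
      unfolding y_def using is_norm_on_scale[OF assms(1) diff, of "1 / c"] \<open>0 < c\<close> by simp
    ultimately have "N y \<le> 1" using \<open>0 < c\<close> by simp
    then have "y \<in> unit_ball_norm n N"
      using diff unfolding unit_ball_norm_def y_def coord_space_def by simp
    moreover have "(\<lambda>i. a f0 i + c * y i) = a f"
      using \<open>0 < c\<close> by (simp add: y_def vsub_def)
    ultimately show ?thesis unfolding c_def by blast
  qed
qed

lemma lipschitz_width_le_codec_error:
  fixes K :: "'a::real_normed_vector set"
  assumes "bounded K" "K \<noteq> {}" "1 \<le> n" "0 < \<gamma>" and codec: "stable_codec \<gamma> n K N a M"
  shows "lipschitz_width (\<gamma>\<^sup>2 * diameter K) n K \<le> (SUP f\<in>K. norm (f - M (a f)))"
proof -
  have N: "is_norm_on n N" and a: "\<forall>f\<in>K. a f \<in> coord_space n"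
      "\<forall>f\<in>K. \<forall>g\<in>K. N (vsub (a f) (a g)) \<le> \<gamma> * norm (f - g)"
    and M: "\<forall>y\<in>coord_space n. \<forall>y'\<in>coord_space n. norm (M y - M y') \<le> \<gamma> * N (vsub y y')"
    using codec unfolding stable_codec_def by blast+
  obtain f0 where f0: "f0 \<in> K" using assms(2) by blast
  define \<Phi> where "\<Phi> = (\<lambda>y. M (\<lambda>i. a f0 i + \<gamma> * diameter K * y i))"
  have diam: "0 \<le> diameter K" using diameter_ge_0[OF assms(1)] .
  have "lipschitz_on_unit_ball (\<gamma>\<^sup>2 * diameter K) n N \<Phi>"
    using rescaled_chart_lipschitz[OF N a(1)[rule_format, OF f0] _ M, of "\<gamma> * diameter K"] diam assms(4)
    unfolding \<Phi>_def by (simp add: power2_eq_square mult.assoc)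
  moreover have "\<exists>y\<in>unit_ball_norm n N. norm (f - \<Phi> y) \<le> (SUP f\<in>K. norm (f - M (a f)))"
    if f: "f \<in> K" for f
  proof -
    have "norm (f - M (a f)) \<le> (SUP f\<in>K. norm (f - M (a f)))"
      using f bdd_above_codec_error[OF assms(1) _ codec] assms(4) by (intro cSUP_upper) auto
    moreover obtain y where "y \<in> unit_ball_norm n N" "\<Phi> y = M (a f)"
      using encoder_in_scaled_unit_ball[OF N assms(1,4) f0 f a] unfolding \<Phi>_def by auto
    ultimately show ?thesis by (intro bexI[where x = y]) simp_all
  qed
  ultimately have "lipschitz_width_fixed (\<gamma>\<^sup>2 * diameter K) n N K \<le> (SUP f\<in>K. norm (f - M (a f)))"
    by (rule lipschitz_width_fixed_le[OF N assms(1,2)])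
  moreover have "lipschitz_width (\<gamma>\<^sup>2 * diameter K) n K \<le> lipschitz_width_fixed (\<gamma>\<^sup>2 * diameter K) n N K"
    using diam by (intro lipschitz_width_le_fixed[OF assms(3) order_refl N assms(1,2)]) simp
  ultimately show ?thesis by linarith
qed

theorem theorem6p1:
  fixes K :: "'a::banach set" and n :: nat and \<gamma> :: real
  assumes "compact K" and "n \<ge> 1" and "\<gamma> > 0"
  shows "lipschitz_width (\<gamma>\<^sup>2 * diameter K) n K \<le> stable_manifold_width \<gamma> n K"
proof (rule le_stable_manifold_width)
  show "0 \<le> \<gamma>" using assms(3) by simp
  fix N a M assume codec: "stable_codec \<gamma> n K N a M"
  show "lipschitz_width (\<gamma>\<^sup>2 * diameter K) n K \<le> (SUP f\<in>K. norm (f - M (a f)))"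
  proof (cases "K = {}")
    case True
    then show ?thesis by (simp add: lipschitz_width_empty[OF assms(2)])
  next
    case False
    show ?thesis
      by (rule lipschitz_width_le_codec_error[OF compact_imp_bounded[OF assms(1)] False assms(2,3) codec])
  qed
qed

end
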